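(* Let $Q^\star$ and $Q$ be two SPJ queries over the same schema. Suppose no database constraints are present, and suppose there exists some database instance $D$ on which $Q^\star$ or $Q$ returns a non-empty result. If $Q^\star$ and $Q$ are equivalent under bag semantics, then $\mathrm{Tables}(Q^\star)=\mathrm{Tables}(Q)$ as multisets. Equivalently, if $\mathrm{Tables}(Q^\star)\neq\mathrm{Tables}(Q)$ as multisets, then $Q^\star$ and $Q$ are not equivalent under bag semantics.
   Context: A database instance assigns to each table name of the schema a finite multiset (bag) of tuples over that table's columns. "No database constraints" means every such assignment is a legal instance. An SPJ query is a single-block SQL query of the form SELECT $e_1,\dots,e_k$ FROM $T_1$ AS $a_1$, …, $T_m$ AS $a_m$ WHERE $P$, with $m\ge 1$, where: - $a_1,\dots,a_m$ are distinct aliases, and the same table may occur several times (self-joins); - $P$ is a quantifier-free predicate over column references; - $e_1,\dots,e_k$ are scalar expressions over column references; - there is no GROUP BY, no aggregation, no HAVING and no DISTINCT. Under bag semantics the result of such a query is the following multiset: for every tuple of the bag cross product $T_1\times\dots\times T_m$ (multiplicities multiply) that satisfies $P$, the row $(e_1,\dots,e_k)$ evaluated on that tuple. $\mathrm{Tables}(Q)$ denotes the multiset $\{T_1,\dots,T_m\}$ of tables in the FROM clause of $Q$, counted with multiplicity. Two queries are equivalent under bag semantics if on every database instance they return the same multiset of result rows. *)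

theory Defs
  imports Main "HOL-Library.Multiset"
begin

text \<open>A schema assigns to each table name its
  arity (columns are addressed by position 0..arity-1).  Aliases are the positions in the FROM list, so
  they are automatically distinct and self-joins are allowed.\<close>

datatype ('v, 'f) sexpr =
    Col nat nat          \<comment> \<open>column reference: alias index, column index\<close>
  | Const 'v
  | Fn 'f "('v, 'f) sexpr list"

datatype ('v, 'f, 'r) pred =
    PTrue | PFalse
  | PEq "('v, 'f) sexpr" "('v, 'f) sexpr"
  | PRel 'r "('v, 'f) sexpr list"
  | PNot "('v, 'f, 'r) pred"
  | PAnd "('v, 'f, 'r) pred" "('v, 'f, 'r) pred"
  | POr "('v, 'f, 'r) pred" "('v, 'f, 'r) pred"

record ('tn, 'v, 'f, 'r) spj =
  sel   :: "('v, 'f) sexpr list"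
  from_tabs :: "'tn list"
  where_pred :: "('v, 'f, 'r) pred"

fun cols_e :: "('v, 'f) sexpr \<Rightarrow> (nat \<times> nat) set" where
  "cols_e (Col i j) = {(i, j)}"
| "cols_e (Const c) = {}"
| "cols_e (Fn f es) = (\<Union>e\<in>set es. cols_e e)"

fun cols_p :: "('v, 'f, 'r) pred \<Rightarrow> (nat \<times> nat) set" where
  "cols_p PTrue = {}"
| "cols_p PFalse = {}"
| "cols_p (PEq a b) = cols_e a \<union> cols_e b"
| "cols_p (PRel r es) = (\<Union>e\<in>set es. cols_e e)"
| "cols_p (PNot p) = cols_p p"
| "cols_p (PAnd p q) = cols_p p \<union> cols_p q"
| "cols_p (POr p q) = cols_p p \<union> cols_p q"

definition wf_query :: "('tn \<Rightarrow> nat) \<Rightarrow> ('tn, 'v, 'f, 'r) spj \<Rightarrow> bool" where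
  "wf_query ar Q \<longleftrightarrow> from_tabs Q \<noteq> [] \<and>
     (\<forall>(i, j) \<in> cols_p (where_pred Q) \<union> (\<Union>e\<in>set (sel Q). cols_e e).
        i < length (from_tabs Q) \<and> j < ar (from_tabs Q ! i))"

text \<open>Evaluation on a joined tuple (list of rows, one per alias), under fixed
  interpretations of function and relation symbols.\<close>
fun eval_e :: "('f \<Rightarrow> 'v list \<Rightarrow> 'v) \<Rightarrow> 'v list list \<Rightarrow> ('v, 'f) sexpr \<Rightarrow> 'v" where
  "eval_e fI rs (Col i j) = rs ! i ! j"
| "eval_e fI rs (Const c) = c"
| "eval_e fI rs (Fn f es) = fI f (map (eval_e fI rs) es)"

fun eval_p :: "('f \<Rightarrow> 'v list \<Rightarrow> 'v) \<Rightarrow> ('r \<Rightarrow> 'v list \<Rightarrow> bool) \<Rightarrow> 'v list list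
               \<Rightarrow> ('v, 'f, 'r) pred \<Rightarrow> bool" where
  "eval_p fI rI rs PTrue = True"
| "eval_p fI rI rs PFalse = False"
| "eval_p fI rI rs (PEq a b) = (eval_e fI rs a = eval_e fI rs b)"
| "eval_p fI rI rs (PRel r es) = rI r (map (eval_e fI rs) es)"
| "eval_p fI rI rs (PNot p) = (\<not> eval_p fI rI rs p)"
| "eval_p fI rI rs (PAnd p q) = (eval_p fI rI rs p \<and> eval_p fI rI rs q)"
| "eval_p fI rI rs (POr p q) = (eval_p fI rI rs p \<or> eval_p fI rI rs q)"

type_synonym ('tn, 'v) db_instance = "'tn \<Rightarrow> 'v list multiset"

definition legal_instance :: "('tn \<Rightarrow> nat) \<Rightarrow> ('tn, 'v) db_instance \<Rightarrow> bool" where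
  "legal_instance ar D \<longleftrightarrow> (\<forall>T. \<forall>t \<in># D T. length t = ar T)"

fun cross :: "('tn, 'v) db_instance \<Rightarrow> 'tn list \<Rightarrow> 'v list list multiset" where
  "cross D [] = {#[]#}"
| "cross D (T # Ts) = (\<Sum>r \<in># D T. image_mset (\<lambda>rs. r # rs) (cross D Ts))"

definition result :: "('f \<Rightarrow> 'v list \<Rightarrow> 'v) \<Rightarrow> ('r \<Rightarrow> 'v list \<Rightarrow> bool) \<Rightarrow>
    ('tn, 'v) db_instance \<Rightarrow> ('tn, 'v, 'f, 'r) spj \<Rightarrow> 'v list multiset" where
  "result fI rI D Q =
     image_mset (\<lambda>rs. map (eval_e fI rs) (sel Q))
       (filter_mset (\<lambda>rs. eval_p fI rI rs (where_pred Q)) (cross D (from_tabs Q)))"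

definition bag_equivalent where
  "bag_equivalent ar fI rI Q1 Q2 \<longleftrightarrow>
     (\<forall>D. legal_instance ar D \<longrightarrow> result fI rI D Q1 = result fI rI D Q2)"

definition Tables :: "('tn, 'v, 'f, 'r) spj \<Rightarrow> 'tn multiset" where
  "Tables Q = mset (from_tabs Q)"

end

theory Submission
  imports Defs
begin

text \<open>Replacing the bag of a table T by k copies of itself multiplies the bag cross
  product, hence the result of any SPJ query, by k to the number of occurrences of T in
  its FROM clause. Taking k = 2 on an instance where both queries return the same
  non-empty bag, bag equivalence forces 2 ^ count (Tables Qs) T = 2 ^ count (Tables Q) T
  for every table T.\<close>

lemma image_mset_repeat_mset:
  "image_mset f (repeat_mset k M) = repeat_mset k (image_mset f M)"
  by (induction k) auto

lemma filter_mset_repeat_mset: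
  "filter_mset P (repeat_mset k M) = repeat_mset k (filter_mset P M)"
  by (induction k) auto

lemma sum_mset_repeat_mset_summands:
  "(\<Sum>x \<in># A. repeat_mset k (f x)) = repeat_mset k (\<Sum>x \<in># A. f x)"
  by (induction A) auto

lemma sum_mset_repeat_mset:
  "sum_mset (repeat_mset k M) = repeat_mset k (sum_mset M :: 'a multiset)"
  by (induction k) auto

lemma cross_repeat_table:
  "cross (D(T := repeat_mset k (D T))) Ts = repeat_mset (k ^ count (mset Ts) T) (cross D Ts)"
proof (induction Ts)
  case Nil
  show ?case by simp
next
  case (Cons T' Ts)
  then show ?case
    by (cases "T' = T")
       (simp_all add: image_mset_repeat_mset sum_mset_repeat_mset_summands
          sum_mset_repeat_mset mult.commute)
qed

lemma result_repeat_table: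
  "result fI rI (D(T := repeat_mset k (D T))) Q = repeat_mset (k ^ count (Tables Q) T) (result fI rI D Q)"
  unfolding result_def Tables_def
  by (simp add: cross_repeat_table filter_mset_repeat_mset image_mset_repeat_mset)

lemma legal_instance_repeat_table:
  "legal_instance ar D \<Longrightarrow> legal_instance ar (D(T := repeat_mset k (D T)))"
  unfolding legal_instance_def by (metis count_eq_zero_iff count_repeat_mset fun_upd_apply mult_0_right)

theorem mainTheorem1:
  fixes ar :: "'tn \<Rightarrow> nat"
    and fI :: "'f \<Rightarrow> 'v list \<Rightarrow> 'v"
    and rI :: "'r \<Rightarrow> 'v list \<Rightarrow> bool"
    and Qs Q :: "('tn, 'v, 'f, 'r) spj"
  assumes "wf_query ar Qs" and "wf_query ar Q"
    and "\<exists>D. legal_instance ar D \<and> (result fI rI D Qs \<noteq> {#} \<or> result fI rI D Q \<noteq> {#})"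
    and "bag_equivalent ar fI rI Qs Q"
  shows "Tables Qs = Tables Q"
proof (rule multiset_eqI)
  fix T
  from assms(3) obtain D where legal: "legal_instance ar D"
    and nonempty: "result fI rI D Qs \<noteq> {#} \<or> result fI rI D Q \<noteq> {#}" by blast
  let ?D2 = "D(T := repeat_mset 2 (D T))"
  have same: "result fI rI D Qs = result fI rI D Q"
    using assms(4) legal unfolding bag_equivalent_def by blast
  have "result fI rI ?D2 Qs = result fI rI ?D2 Q"
    using assms(4) legal_instance_repeat_table[OF legal] unfolding bag_equivalent_def by blast
  then have "repeat_mset (2 ^ count (Tables Qs) T) (result fI rI D Q)
           = repeat_mset (2 ^ count (Tables Q) T) (result fI rI D Q)"
    by (simp only: result_repeat_table same)
  moreover have "result fI rI D Q \<noteq> {#}"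
    using nonempty same by auto
  ultimately have "(2::nat) ^ count (Tables Qs) T = 2 ^ count (Tables Q) T"
    by (simp add: repeat_mset_cancel2)
  then show "count (Tables Qs) T = count (Tables Q) T"
    by simp
qed

end
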